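(* Let $X$ be a random vector in $\mathbb{R}^d$ with finite mean, and let $X_1, \dots, X_n$ be $n$ independent copies of $X$. Let $\lambda, \mu, \beta > 0$ and $\delta \in (0,1)$. Define $Y = \frac{\psi(\lambda \lVert X \rVert)}{\lambda \lVert X \rVert} X$, $Y_i = \frac{\psi(\lambda \lVert X_i \rVert)}{\lambda \lVert X_i \rVert} X_i$, where $\psi(t) = \min\{t,1\}$ for $t \geq 0$, and let $\widetilde{m} = \mathbb{E}(Y)$ and $\widehat{m} = \frac{1}{n}\sum_{i=1}^n Y_i$. Then with probability at least $1 - \delta$, for any $\theta \in \mathbb{S}_d = \{\theta \in \mathbb{R}^d : \lVert \theta \rVert = 1\}$, \[ \langle \theta, \widehat{m} - \widetilde{m} \rangle = \frac{1}{n}\sum_{i=1}^n \langle \theta, Y_i - \widetilde{m} \rangle \leq g_2(2\mu) \frac{\mu \lambda}{2} \mathbb{E}\bigl( \langle \theta, Y - \widetilde{m} \rangle^2 \bigr) + \exp(2\mu)\, g_1\biggl( \frac{2\mu^2}{\beta} \biggr) \frac{\mu \lambda}{2 \beta} \mathbb{E}\bigl( \lVert Y - \widetilde{m} \rVert^2 \bigr) + \frac{\beta + 2 \log(\delta^{-1})}{2 \mu \lambda n}. \]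
   Context: $\lVert \cdot \rVert$ and $\langle \cdot, \cdot \rangle$ are the Euclidean norm and inner product on $\mathbb{R}^d$. The functions $g_1(t) = \frac{1}{t}(\exp(t) - 1)$ and $g_2(t) = \frac{2}{t^2}(\exp(t) - 1 - t)$, $t \in \mathbb{R}$, are extended by continuity at $t = 0$ with $g_1(0) = g_2(0) = 1$. The factor $\frac{\psi(\lambda \lVert x \rVert)}{\lambda \lVert x \rVert}$ is taken to be $1$ when $x = 0$, so that $Y$ is the projection of $X$ onto the closed ball of radius $1/\lambda$ centred at $0$. *)

theory Defs
  imports "HOL-Probability.Probability"
begin

definition g1 :: "real \<Rightarrow> real" where
  "g1 t = (if t = 0 then 1 else (exp t - 1) / t)"

definition g2 :: "real \<Rightarrow> real" where
  "g2 t = (if t = 0 then 1 else 2 * (exp t - 1 - t) / t\<^sup>2)"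

definition psi :: "real \<Rightarrow> real" where
  "psi t = min t 1"

definition thresh :: "real \<Rightarrow> 'a::real_normed_vector \<Rightarrow> 'a" where
  "thresh lam x = (if x = 0 then x else (psi (lam * norm x) / (lam * norm x)) *\<^sub>R x)"

end

theory Submission
  imports Defs
begin

(*
  A PAC-Bayesian argument with Gaussian perturbations. Write V = mu lam (Y - E Y), so that
  |V| <= 2 mu and E V = 0, and let S be the sum of the n independent copies of V. Under the
  prior pi = N(0, I/beta), the potential Z = int exp (<S, x> - n (E exp <x, V> - 1)) dpi(x) has
  expectation at most 1: by independence its inner expectation is (L exp (1 - L))^n <= 1, where
  L is the moment generating function of V at x. Markov's inequality gives Z < 1/delta with
  probability at least 1 - delta. On that event, translating the prior to N(theta, I/beta) costs
  its Kullback-Leibler divergence beta/2, and Jensen's inequality yields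
    <theta, S> <= ln (1/delta) + beta/2 + n (E exp (<theta, V> + |V|^2 / (2 beta)) - 1).
  The last expectation is estimated with exp s <= 1 + s + g2 c s^2/2 for s <= c and
  exp t - 1 <= g1 C t for 0 <= t <= C.
*)

section \<open>Elementary exponential inequalities\<close>

lemma exp_le_taylor2_nonpos:
  fixes s :: real assumes "s \<le> 0"
  shows "exp s \<le> 1 + s + s\<^sup>2 / 2"
proof -
  have "(\<lambda>x. 1 + x + x\<^sup>2 / 2 - exp x) 0 \<le> (\<lambda>x. 1 + x + x\<^sup>2 / 2 - exp x) s"
  proof (rule deriv_nonpos_imp_antimono[where g="\<lambda>x. 1 + x + x\<^sup>2 / 2 - exp x" and g'="\<lambda>x. 1 + x - exp x"])
    fix x :: real
    show "((\<lambda>x. 1 + x + x\<^sup>2 / 2 - exp x) has_real_derivative 1 + x - exp x) (at x)"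
      by (auto intro!: derivative_eq_intros)
    show "1 + x - exp x \<le> 0" using exp_ge_add_one_self[of x] by linarith
  qed (use assms in auto)
  then show ?thesis by simp
qed

lemma exp_ge_taylor2:
  fixes s :: real assumes "0 \<le> s"
  shows "1 + s + s\<^sup>2 / 2 \<le> exp s"
proof -
  have "(\<lambda>x. exp x - 1 - x - x\<^sup>2 / 2) 0 \<le> (\<lambda>x. exp x - 1 - x - x\<^sup>2 / 2) s"
  proof (rule deriv_nonneg_imp_mono[where g="\<lambda>x. exp x - 1 - x - x\<^sup>2 / 2" and g'="\<lambda>x. exp x - 1 - x"])
    fix x :: real
    show "((\<lambda>x. exp x - 1 - x - x\<^sup>2 / 2) has_real_derivative exp x - 1 - x) (at x)"
      by (auto intro!: derivative_eq_intros)
    show "0 \<le> exp x - 1 - x" using exp_ge_add_one_self[of x] by linarith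
  qed (use assms in auto)
  then show ?thesis by simp
qed

lemma g2_ge_1: "0 < c \<Longrightarrow> 1 \<le> g2 c"
  using exp_ge_taylor2[of c] by (auto simp: g2_def field_simps)

lemma g2_mono:
  fixes s c :: real assumes "0 < s" "s \<le> c"
  shows "g2 s \<le> g2 c"
proof -
  have numerator_nonneg: "0 \<le> (x - 2) * exp x + x + 2" if "0 \<le> x" for x :: real
  proof -
    have "(\<lambda>x. (x - 2) * exp x + x + 2) 0 \<le> (\<lambda>x. (x - 2) * exp x + x + 2) x"
    proof (rule deriv_nonneg_imp_mono[where g="\<lambda>x. (x - 2) * exp x + x + 2" and g'="\<lambda>x. (x - 1) * exp x + 1"])
      fix y :: real
      show "((\<lambda>x. (x - 2) * exp x + x + 2) has_real_derivative (y - 1) * exp y + 1) (at y)"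
        by (auto intro!: derivative_eq_intros simp: algebra_simps)
      have "(1 - y) * exp y \<le> exp (- y) * exp y"
        using exp_ge_add_one_self[of "-y"] by (intro mult_right_mono) auto
      then show "0 \<le> (y - 1) * exp y + 1" by (simp add: exp_minus field_simps)
    qed (use that in auto)
    then show ?thesis by simp
  qed
  have "(\<lambda>x. 2 * (exp x - 1 - x) / x\<^sup>2) s \<le> (\<lambda>x. 2 * (exp x - 1 - x) / x\<^sup>2) c"
  proof (rule deriv_nonneg_imp_mono[where g="\<lambda>x. 2 * (exp x - 1 - x) / x\<^sup>2" and g'="\<lambda>x. 2 * ((x - 2) * exp x + x + 2) / x ^ 3"])
    fix x assume "x \<in> {s..c}"
    then have "0 < x" using assms by auto
    then show "((\<lambda>x. 2 * (exp x - 1 - x) / x\<^sup>2) has_real_derivative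
        2 * ((x - 2) * exp x + x + 2) / x ^ 3) (at x)"
      by (auto intro!: derivative_eq_intros simp: field_simps power2_eq_square power3_eq_cube)
    show "0 \<le> 2 * ((x - 2) * exp x + x + 2) / x ^ 3"
      using numerator_nonneg[of x] \<open>0 < x\<close> by simp
  qed (use assms in auto)
  then show ?thesis using assms by (simp add: g2_def)
qed

lemma exp_le_g2:
  fixes s c :: real assumes "0 < c" "s \<le> c"
  shows "exp s \<le> 1 + s + g2 c * s\<^sup>2 / 2"
proof (cases "s \<le> 0")
  case True
  then have "exp s \<le> 1 + s + 1 * s\<^sup>2 / 2" using exp_le_taylor2_nonpos by simp
  also have "\<dots> \<le> 1 + s + g2 c * s\<^sup>2 / 2"
    using g2_ge_1[OF assms(1)] by (intro add_left_mono divide_right_mono mult_right_mono) auto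
  finally show ?thesis .
next
  case False
  then have "exp s = 1 + s + g2 s * s\<^sup>2 / 2" by (simp add: g2_def field_simps)
  also have "\<dots> \<le> 1 + s + g2 c * s\<^sup>2 / 2"
    using g2_mono[of s c] False assms by (intro add_left_mono divide_right_mono mult_right_mono) auto
  finally show ?thesis .
qed

lemma exp_minus_one_le_g1:
  fixes t C :: real assumes "0 < C" "0 \<le> t" "t \<le> C"
  shows "exp t - 1 \<le> g1 C * t"
proof -
  have "exp ((1 - t / C) *\<^sub>R 0 + (t / C) *\<^sub>R C) \<le> (1 - t / C) * exp 0 + (t / C) * exp C"
    using assms by (intro convex_onD[OF exp_convex]) auto
  moreover have "(1 - t / C) *\<^sub>R 0 + (t / C) *\<^sub>R C = t" using assms by simp
  moreover have "g1 C * t = t / C * exp C - t / C" using assms by (simp add: g1_def field_simps)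
  ultimately show ?thesis by simp
qed

lemma exp_add_minus_one_le:
  fixes s t c C :: real assumes "0 < c" "s \<le> c" "0 < C" "0 \<le> t" "t \<le> C"
  shows "exp (s + t) - 1 \<le> s + g2 c * s\<^sup>2 / 2 + exp c * g1 C * t"
proof -
  have "exp (s + t) - 1 = (exp s - 1) + exp s * (exp t - 1)" by (simp add: exp_add algebra_simps)
  also have "exp s - 1 \<le> s + g2 c * s\<^sup>2 / 2" using exp_le_g2[OF assms(1,2)] by simp
  also have "exp s * (exp t - 1) \<le> exp c * (g1 C * t)"
    using assms exp_minus_one_le_g1[of C t] by (intro mult_mono) auto
  finally show ?thesis by (simp add: algebra_simps)
qed

lemma mult_exp_one_minus_le_1:
  fixes x :: real shows "x * exp (1 - x) \<le> 1"
proof -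
  have "x \<le> exp (x - 1)" using exp_ge_add_one_self[of "x - 1"] by simp
  then have "x * exp (1 - x) \<le> exp (x - 1) * exp (1 - x)" by (rule mult_right_mono) simp
  then show ?thesis by (simp add: exp_add[symmetric])
qed

section \<open>Centred isotropic Gaussian measures\<close>

definition gaussian_density :: "real \<Rightarrow> 'a::euclidean_space \<Rightarrow> real" where
  "gaussian_density b x = sqrt (b / (2 * pi)) ^ DIM('a) * exp (- b * (norm x)\<^sup>2 / 2)"

definition gaussian :: "real \<Rightarrow> 'a::euclidean_space measure" where
  "gaussian b = density lborel (\<lambda>x. ennreal (gaussian_density b x))"

lemma gaussian_density_pos: "0 < b \<Longrightarrow> 0 < gaussian_density b x"
  by (simp add: gaussian_density_def)

lemma borel_measurable_gaussian_density[measurable]: "gaussian_density b \<in> borel_measurable borel"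
  unfolding gaussian_density_def by measurable

lemma space_gaussian[simp]: "space (gaussian b) = UNIV"
  and sets_gaussian[simp, measurable_cong]: "sets (gaussian b) = sets borel"
  by (simp_all add: gaussian_def)

lemma gaussian_density_eq_prod_normal_density:
  fixes x :: "'a::euclidean_space" assumes b: "0 < b"
  shows "gaussian_density b x = (\<Prod>j\<in>Basis. normal_density 0 (1 / sqrt b) (x \<bullet> j))"
proof -
  have nd: "normal_density 0 (1 / sqrt b) t = sqrt (b / (2 * pi)) * exp (- b * t\<^sup>2 / 2)" for t
    using b by (simp add: normal_density_def real_sqrt_divide power_divide field_simps)
  have "(norm x)\<^sup>2 = (\<Sum>j\<in>(Basis::'a set). (x \<bullet> j)\<^sup>2)"
    unfolding power2_norm_eq_inner by (subst euclidean_inner) (simp add: power2_eq_square)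
  then have "- b * (norm x)\<^sup>2 / 2 = (\<Sum>j\<in>(Basis::'a set). - b * (x \<bullet> j)\<^sup>2 / 2)"
    by (simp add: sum_distrib_left sum_divide_distrib)
  then have "exp (- b * (norm x)\<^sup>2 / 2) = (\<Prod>j\<in>(Basis::'a set). exp (- b * (x \<bullet> j)\<^sup>2 / 2))"
    by (simp add: exp_sum)
  then show ?thesis
    by (simp only: nd prod.distrib gaussian_density_def prod_constant)
qed

lemma prob_space_gaussian: "0 < b \<Longrightarrow> prob_space (gaussian b)"
proof (rule prob_spaceI)
  assume b: "0 < b"
  have "(\<integral>\<^sup>+x. ennreal (gaussian_density b (x::'a)) \<partial>lborel)
      = (\<integral>\<^sup>+x. (\<Prod>j\<in>Basis. ennreal (normal_density 0 (1 / sqrt b) ((x::'a) \<bullet> j))) \<partial>lborel)"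
    by (simp add: gaussian_density_eq_prod_normal_density[OF b] prod_ennreal)
  also have "\<dots> = (\<Prod>j\<in>(Basis::'a set). \<integral>\<^sup>+t. ennreal (normal_density 0 (1 / sqrt b) t) \<partial>lborel)"
    by (rule nn_integral_lborel_prod) auto
  also have "(\<integral>\<^sup>+t. ennreal (normal_density 0 (1 / sqrt b) t) \<partial>lborel) = 1"
    using b by (subst nn_integral_eq_integral) auto
  finally show "emeasure (gaussian b :: 'a measure) (space (gaussian b)) = 1"
    by (simp add: gaussian_def emeasure_density)
qed

lemma nn_integral_lborel_translate:
  fixes c :: "'a::euclidean_space"
  assumes [measurable]: "f \<in> borel_measurable borel"
  shows "(\<integral>\<^sup>+x. f (x + c) \<partial>lborel) = (\<integral>\<^sup>+x. f x \<partial>lborel)"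
proof -
  have "(\<integral>\<^sup>+x. f x \<partial>lborel) = (\<integral>\<^sup>+x. f x \<partial>distr lborel borel ((+) c))"
    by (simp add: lborel_distr_plus)
  also have "\<dots> = (\<integral>\<^sup>+x. f (c + x) \<partial>lborel)"
    by (simp add: nn_integral_distr)
  finally show ?thesis by (simp add: add.commute)
qed

lemma gaussian_density_translate:
  fixes x c :: "'a::euclidean_space"
  shows "gaussian_density b (x + c) = gaussian_density b x * exp (- b * (x \<bullet> c) - b * (norm c)\<^sup>2 / 2)"
proof -
  have "(norm (x + c))\<^sup>2 = (norm x)\<^sup>2 + 2 * (x \<bullet> c) + (norm c)\<^sup>2"
    by (simp add: power2_norm_eq_inner algebra_simps inner_commute)
  then have "- b * (norm (x + c))\<^sup>2 / 2 = - b * (norm x)\<^sup>2 / 2 + (- b * (x \<bullet> c) - b * (norm c)\<^sup>2 / 2)"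
    by (simp add: field_simps)
  then show ?thesis
    by (simp only: gaussian_density_def exp_add mult.assoc)
qed

lemma nn_integral_gaussian_translate:
  fixes c :: "'a::euclidean_space"
  assumes [measurable]: "f \<in> borel_measurable borel" and b: "0 < b"
  shows "(\<integral>\<^sup>+x. f x \<partial>gaussian b)
    = (\<integral>\<^sup>+y. f (y + c) * ennreal (exp (- b * (y \<bullet> c) - b * (norm c)\<^sup>2 / 2)) \<partial>gaussian b)"
proof -
  have "(\<integral>\<^sup>+x. f x \<partial>gaussian b) = (\<integral>\<^sup>+x. ennreal (gaussian_density b x) * f x \<partial>lborel)"
    by (simp add: gaussian_def nn_integral_density)
  also have "\<dots> = (\<integral>\<^sup>+y. ennreal (gaussian_density b (y + c)) * f (y + c) \<partial>lborel)"
    by (rule nn_integral_lborel_translate[symmetric]) measurable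
  also have "\<dots> = (\<integral>\<^sup>+y. ennreal (gaussian_density b y)
      * (f (y + c) * ennreal (exp (- b * (y \<bullet> c) - b * (norm c)\<^sup>2 / 2))) \<partial>lborel)"
    by (intro nn_integral_cong)
      (simp add: gaussian_density_translate ennreal_mult less_imp_le[OF gaussian_density_pos[OF b]] ac_simps)
  also have "\<dots> = (\<integral>\<^sup>+y. f (y + c) * ennreal (exp (- b * (y \<bullet> c) - b * (norm c)\<^sup>2 / 2)) \<partial>gaussian b)"
    by (simp add: gaussian_def nn_integral_density)
  finally show ?thesis .
qed

lemma nn_integral_gaussian_exp_inner:
  fixes v :: "'a::euclidean_space" assumes b: "0 < b"
  shows "(\<integral>\<^sup>+x. ennreal (exp (v \<bullet> x)) \<partial>gaussian b) = ennreal (exp ((norm v)\<^sup>2 / (2 * b)))"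
proof -
  let ?c = "- (1 / b) *\<^sub>R v"
  have "- b * (x \<bullet> ?c) - b * (norm ?c)\<^sup>2 / 2 = v \<bullet> x - (norm v)\<^sup>2 / (2 * b)" for x
    using b by (simp add: inner_commute power_mult_distrib power2_eq_square field_simps)
  then have "gaussian_density b (x + ?c) = gaussian_density b x * exp (v \<bullet> x - (norm v)\<^sup>2 / (2 * b))" for x
    by (simp only: gaussian_density_translate)
  then have completed_square:
    "gaussian_density b x * exp (v \<bullet> x) = exp ((norm v)\<^sup>2 / (2 * b)) * gaussian_density b (x + ?c)" for x
    unfolding exp_diff by simp
  have "(\<integral>\<^sup>+x. ennreal (exp (v \<bullet> x)) \<partial>gaussian b)
      = (\<integral>\<^sup>+x. ennreal (gaussian_density b x * exp (v \<bullet> x)) \<partial>lborel)"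
    by (simp add: gaussian_def nn_integral_density ennreal_mult less_imp_le[OF gaussian_density_pos[OF b]])
  also have "\<dots> = (\<integral>\<^sup>+x. ennreal (exp ((norm v)\<^sup>2 / (2 * b))) * ennreal (gaussian_density b (x + ?c)) \<partial>lborel)"
    by (intro nn_integral_cong) (simp add: completed_square ennreal_mult less_imp_le[OF gaussian_density_pos[OF b]])
  also have "\<dots> = ennreal (exp ((norm v)\<^sup>2 / (2 * b))) * (\<integral>\<^sup>+x. ennreal (gaussian_density b (x::'a)) \<partial>lborel)"
    using nn_integral_lborel_translate[of "\<lambda>x. ennreal (gaussian_density b x)" ?c]
    by (simp add: nn_integral_cmult)
  also have "(\<integral>\<^sup>+x. ennreal (gaussian_density b (x::'a)) \<partial>lborel) = emeasure (gaussian b :: 'a measure) UNIV"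
    by (simp add: gaussian_def emeasure_density)
  finally show ?thesis
    using prob_space.emeasure_space_1[OF prob_space_gaussian[OF b, where 'a='a]] by simp
qed

lemma integrable_gaussian_inner:
  fixes v :: "'a::euclidean_space" assumes b: "0 < b"
  shows "integrable (gaussian b) (\<lambda>x. v \<bullet> x)"
proof (rule integrableI_bounded)
  have "\<bar>v \<bullet> x\<bar> \<le> exp (v \<bullet> x) + exp ((- v) \<bullet> x)" for x
    using exp_ge_add_one_self[of "v \<bullet> x"] exp_ge_add_one_self[of "- (v \<bullet> x)"]
      exp_gt_zero[of "v \<bullet> x"] exp_gt_zero[of "- (v \<bullet> x)"]
    unfolding abs_le_iff inner_minus_left by linarith
  then have "(\<integral>\<^sup>+x. ennreal (norm (v \<bullet> x)) \<partial>gaussian b)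
      \<le> (\<integral>\<^sup>+x. ennreal (exp (v \<bullet> x)) + ennreal (exp ((- v) \<bullet> x)) \<partial>gaussian b)"
    by (intro nn_integral_mono) (simp add: ennreal_plus[symmetric] del: ennreal_plus)
  also have "\<dots> < \<infinity>"
    using nn_integral_gaussian_exp_inner[OF b, of v] nn_integral_gaussian_exp_inner[OF b, of "- v"]
    by (simp add: nn_integral_add)
  finally show "(\<integral>\<^sup>+x. ennreal (norm (v \<bullet> x)) \<partial>gaussian b) < \<infinity>" .
qed simp

lemma integral_gaussian_inner:
  fixes v :: "'a::euclidean_space" assumes b: "0 < b"
  shows "(\<integral>x. v \<bullet> x \<partial>gaussian b) = 0"
proof -
  have lborel_reflect: "distr lborel borel uminus = (lborel :: 'a measure)"
    by (subst lborel_affine[of "-1" 0]) (auto simp: density_1 one_ennreal_def[symmetric])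
  have I: "(\<integral>x. v \<bullet> x \<partial>gaussian b) = (\<integral>x. gaussian_density b x * (v \<bullet> x) \<partial>lborel)"
    unfolding gaussian_def by (subst integral_density) (auto intro!: less_imp_le gaussian_density_pos b)
  also have "\<dots> = (\<integral>x. gaussian_density b x * (v \<bullet> x) \<partial>distr lborel borel uminus)"
    by (simp add: lborel_reflect)
  also have "\<dots> = - (\<integral>x. gaussian_density b x * (v \<bullet> x) \<partial>lborel)"
    by (subst integral_distr) (auto simp: gaussian_density_def)
  finally show ?thesis using I by simp
qed

lemma (in prob_space) exp_integral_le_nn_integral_exp:
  fixes g :: "'a \<Rightarrow> real"
  assumes g: "integrable M g"
  shows "ennreal (exp (\<integral>x. g x \<partial>M)) \<le> (\<integral>\<^sup>+x. ennreal (exp (g x)) \<partial>M)"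
proof (cases "integrable M (\<lambda>x. exp (g x))")
  case True
  have "exp (\<integral>x. g x \<partial>M) \<le> (\<integral>x. exp (g x) \<partial>M)"
    using g True by (intro jensens_inequality[where I=UNIV]) (auto simp: exp_convex)
  then have "ennreal (exp (\<integral>x. g x \<partial>M)) \<le> ennreal (\<integral>x. exp (g x) \<partial>M)"
    by (rule ennreal_leI)
  also have "\<dots> = (\<integral>\<^sup>+x. ennreal (exp (g x)) \<partial>M)"
    using True by (intro nn_integral_eq_integral[symmetric]) auto
  finally show ?thesis .
next
  case False
  have "\<not> (\<integral>\<^sup>+x. ennreal (exp (g x)) \<partial>M) < \<infinity>"
  proof
    assume "(\<integral>\<^sup>+x. ennreal (exp (g x)) \<partial>M) < \<infinity>"
    moreover have "(\<lambda>x. exp (g x)) \<in> borel_measurable M"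
      using borel_measurable_integrable[OF g] by measurable
    ultimately have "integrable M (\<lambda>x. exp (g x))"
      by (intro integrableI_nonneg) auto
    with False show False ..
  qed
  then have "(\<integral>\<^sup>+x. ennreal (exp (g x)) \<partial>M) = \<infinity>"
    by (simp add: top.not_eq_extremum[symmetric])
  then show ?thesis by simp
qed

lemma (in prob_space) prob_Markov_nn_integral_le_1:
  assumes [measurable]: "Z \<in> borel_measurable M"
    and EZ: "(\<integral>\<^sup>+\<omega>. Z \<omega> \<partial>M) \<le> 1" and delta: "0 < delta"
  shows "1 - delta \<le> prob {\<omega> \<in> space M. ennreal delta * Z \<omega> < 1}"
proof -
  let ?A = "{\<omega> \<in> space M. ennreal delta * Z \<omega> < 1}"
  have "space M - ?A = {\<omega> \<in> space M. 1 \<le> ennreal delta * Z \<omega>}"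
    by (auto simp: not_less)
  also have "emeasure M \<dots> \<le> ennreal delta * (\<integral>\<^sup>+\<omega>. Z \<omega> * indicator (space M) \<omega> \<partial>M)"
    by (rule nn_integral_Markov_inequality) auto
  also have "(\<integral>\<^sup>+\<omega>. Z \<omega> * indicator (space M) \<omega> \<partial>M) = (\<integral>\<^sup>+\<omega>. Z \<omega> \<partial>M)"
    by (intro nn_integral_cong) auto
  also have "ennreal delta * (\<integral>\<^sup>+\<omega>. Z \<omega> \<partial>M) \<le> ennreal delta"
    using mult_left_mono[OF EZ, of "ennreal delta"] by simp
  finally have "prob (space M - ?A) \<le> delta"
    using delta by (simp add: emeasure_eq_measure)
  then show ?thesis
    using prob_compl[of ?A] by simp
qed

lemma (in prob_space) nn_integral_prod_iid:
  fixes X :: "'a \<Rightarrow> 'b::topological_space" and g :: "'b \<Rightarrow> ennreal"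
  assumes "finite I" and indep: "indep_vars (\<lambda>_. borel) Xs I"
    and distr: "\<And>i. i \<in> I \<Longrightarrow> distr M borel (Xs i) = distr M borel X"
    and [measurable]: "X \<in> borel_measurable M" "g \<in> borel_measurable borel"
  shows "(\<integral>\<^sup>+\<omega>. (\<Prod>i\<in>I. g (Xs i \<omega>)) \<partial>M) = (\<integral>\<^sup>+\<omega>. g (X \<omega>) \<partial>M) ^ card I"
proof -
  have "(\<integral>\<^sup>+\<omega>. (\<Prod>i\<in>I. g (Xs i \<omega>)) \<partial>M) = (\<Prod>i\<in>I. \<integral>\<^sup>+\<omega>. g (Xs i \<omega>) \<partial>M)"
    using indep_vars_compose2[OF indep, of "\<lambda>_. g" "\<lambda>_. borel"] \<open>finite I\<close>
    by (intro indep_vars_nn_integral) auto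
  also have "\<dots> = (\<Prod>i\<in>I. \<integral>\<^sup>+\<omega>. g (X \<omega>) \<partial>M)"
  proof (rule prod.cong)
    fix i assume i: "i \<in> I"
    then have [measurable]: "Xs i \<in> borel_measurable M"
      using indep unfolding indep_vars_def by auto
    have "(\<integral>\<^sup>+\<omega>. g (Xs i \<omega>) \<partial>M) = (\<integral>\<^sup>+z. g z \<partial>distr M borel (Xs i))"
      by (simp add: nn_integral_distr)
    also have "\<dots> = (\<integral>\<^sup>+\<omega>. g (X \<omega>) \<partial>M)"
      by (simp add: distr[OF i] nn_integral_distr)
    finally show "(\<integral>\<^sup>+\<omega>. g (Xs i \<omega>) \<partial>M) = (\<integral>\<^sup>+\<omega>. g (X \<omega>) \<partial>M)" .
  qed simp
  finally show ?thesis by simp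
qed

lemma nn_integral_gaussian_change_of_measure:
  fixes h :: "'a::euclidean_space \<Rightarrow> real" and \<theta> :: 'a
  assumes b: "0 < b" and [measurable]: "h \<in> borel_measurable borel"
    and int: "integrable (gaussian b) (\<lambda>y. h (y + \<theta>))"
  shows "ennreal (exp ((\<integral>y. h (y + \<theta>) \<partial>gaussian b) - b * (norm \<theta>)\<^sup>2 / 2))
    \<le> (\<integral>\<^sup>+x. ennreal (exp (h x)) \<partial>gaussian b)"
proof -
  interpret prob_space "gaussian b :: 'a measure" using b by (rule prob_space_gaussian)
  let ?g = "\<lambda>y. h (y + \<theta>) - b * (\<theta> \<bullet> y) - b * (norm \<theta>)\<^sup>2 / 2"
  have int_inner: "integrable (gaussian b) (\<lambda>y. b * (\<theta> \<bullet> y))"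
    using integrable_gaussian_inner[OF b] by (rule integrable_mult_right)
  have int_g: "integrable (gaussian b) ?g"
    using int int_inner by auto
  have "(\<integral>y. ?g y \<partial>gaussian b) = (\<integral>y. h (y + \<theta>) \<partial>gaussian b) - b * (norm \<theta>)\<^sup>2 / 2"
    using int int_inner integral_gaussian_inner[OF b, of \<theta>] prob_space by simp
  then have "ennreal (exp ((\<integral>y. h (y + \<theta>) \<partial>gaussian b) - b * (norm \<theta>)\<^sup>2 / 2))
      \<le> (\<integral>\<^sup>+y. ennreal (exp (?g y)) \<partial>gaussian b)"
    using exp_integral_le_nn_integral_exp[OF int_g] by simp
  also have "\<dots> = (\<integral>\<^sup>+x. ennreal (exp (h x)) \<partial>gaussian b)"
    by (subst nn_integral_gaussian_translate[OF _ b, where c=\<theta>])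
      (auto intro!: nn_integral_cong simp: ennreal_mult[symmetric] exp_add[symmetric] inner_commute)
  finally show ?thesis .
qed

lemma nn_integral_gaussian_exp_inner_shift:
  fixes V :: "'s \<Rightarrow> 'a::euclidean_space"
  assumes "sigma_finite_measure M" and b: "0 < b" and [measurable]: "V \<in> borel_measurable M"
  shows "(\<integral>\<^sup>+y. (\<integral>\<^sup>+\<omega>. ennreal (exp ((y + \<theta>) \<bullet> V \<omega>)) \<partial>M) \<partial>gaussian b)
    = (\<integral>\<^sup>+\<omega>. ennreal (exp (\<theta> \<bullet> V \<omega> + (norm (V \<omega>))\<^sup>2 / (2 * b))) \<partial>M)"
proof -
  interpret M: sigma_finite_measure M by fact
  interpret G: prob_space "gaussian b :: 'a measure" using b by (rule prob_space_gaussian)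
  interpret pair_sigma_finite M "gaussian b :: 'a measure" ..
  have "(\<integral>\<^sup>+y. (\<integral>\<^sup>+\<omega>. ennreal (exp ((y + \<theta>) \<bullet> V \<omega>)) \<partial>M) \<partial>gaussian b)
      = (\<integral>\<^sup>+\<omega>. (\<integral>\<^sup>+y. ennreal (exp (V \<omega> \<bullet> y)) * ennreal (exp (\<theta> \<bullet> V \<omega>)) \<partial>gaussian b) \<partial>M)"
    by (subst Fubini') (auto intro!: nn_integral_cong
        simp: ennreal_mult[symmetric] exp_add[symmetric] inner_add_left inner_add_right inner_commute)
  also have "\<dots> = (\<integral>\<^sup>+\<omega>. ennreal (exp (\<theta> \<bullet> V \<omega> + (norm (V \<omega>))\<^sup>2 / (2 * b))) \<partial>M)"
  proof (intro nn_integral_cong)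
    fix \<omega>
    have "(\<integral>\<^sup>+y. ennreal (exp (V \<omega> \<bullet> y)) * ennreal (exp (\<theta> \<bullet> V \<omega>)) \<partial>gaussian b)
        = ennreal (exp ((norm (V \<omega>))\<^sup>2 / (2 * b))) * ennreal (exp (\<theta> \<bullet> V \<omega>))"
      by (simp add: nn_integral_multc nn_integral_gaussian_exp_inner[OF b])
    also have "\<dots> = ennreal (exp (\<theta> \<bullet> V \<omega> + (norm (V \<omega>))\<^sup>2 / (2 * b)))"
      by (simp add: exp_add ennreal_mult[symmetric] mult.commute)
    finally show "(\<integral>\<^sup>+y. ennreal (exp (V \<omega> \<bullet> y)) * ennreal (exp (\<theta> \<bullet> V \<omega>)) \<partial>gaussian b)
        = ennreal (exp (\<theta> \<bullet> V \<omega> + (norm (V \<omega>))\<^sup>2 / (2 * b)))" .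
  qed
  finally show ?thesis .
qed

section \<open>A PAC-Bayesian bound with Gaussian perturbations\<close>

definition mgf :: "'s measure \<Rightarrow> ('s \<Rightarrow> 'a::real_inner) \<Rightarrow> 'a \<Rightarrow> real" where
  "mgf M V x = (\<integral>\<omega>. exp (x \<bullet> V \<omega>) \<partial>M)"

lemma mgf_nonneg: "0 \<le> mgf M V x"
  unfolding mgf_def by (rule Bochner_Integration.integral_nonneg) simp

lemma (in prob_space) borel_measurable_mgf[measurable]:
  fixes V :: "'a \<Rightarrow> 'b::euclidean_space"
  assumes [measurable]: "V \<in> borel_measurable M"
  shows "mgf M V \<in> borel_measurable borel"
  unfolding mgf_def[abs_def] by measurable

lemma (in prob_space) integrable_exp_inner_bounded:
  fixes V :: "'a \<Rightarrow> 'b::euclidean_space"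
  assumes [measurable]: "V \<in> borel_measurable M" and bnd: "\<And>\<omega>. norm (V \<omega>) \<le> B"
  shows "integrable M (\<lambda>\<omega>. exp (x \<bullet> V \<omega>))"
proof (rule integrable_const_bound[where B="exp (norm x * B)"])
  have "x \<bullet> V \<omega> \<le> norm x * B" for \<omega>
    using norm_cauchy_schwarz[of x "V \<omega>"] mult_left_mono[OF bnd[of \<omega>], of "norm x"] by simp
  then show "AE \<omega> in M. norm (exp (x \<bullet> V \<omega>)) \<le> exp (norm x * B)"
    by simp
qed measurable

lemma (in prob_space) ennreal_mgf:
  fixes V :: "'a \<Rightarrow> 'b::euclidean_space"
  assumes "V \<in> borel_measurable M" and "\<And>\<omega>. norm (V \<omega>) \<le> B"
  shows "ennreal (mgf M V x) = (\<integral>\<^sup>+\<omega>. ennreal (exp (x \<bullet> V \<omega>)) \<partial>M)"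
  unfolding mgf_def using integrable_exp_inner_bounded[OF assms]
  by (rule nn_integral_eq_integral[symmetric]) simp

lemma (in prob_space) nn_integral_gaussian_potential_le_1:
  fixes X :: "'a \<Rightarrow> 'b::topological_space" and f :: "'b \<Rightarrow> 'c::euclidean_space"
  assumes I: "finite I" and indep: "indep_vars (\<lambda>_. borel) Xs I"
    and distr: "\<And>i. i \<in> I \<Longrightarrow> distr M borel (Xs i) = distr M borel X"
    and [measurable]: "X \<in> borel_measurable M" "f \<in> borel_measurable borel"
    and bnd: "\<And>z. norm (f z) \<le> B" and b: "0 < b"
  shows "(\<integral>\<^sup>+\<omega>. \<integral>\<^sup>+x. ennreal (exp ((\<Sum>i\<in>I. f (Xs i \<omega>)) \<bullet> x
      - card I * (mgf M (\<lambda>\<omega>. f (X \<omega>)) x - 1))) \<partial>gaussian b \<partial>M) \<le> 1"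
proof -
  interpret G: prob_space "gaussian b :: 'c measure" using b by (rule prob_space_gaussian)
  interpret pair_sigma_finite "gaussian b :: 'c measure" M ..
  let ?L = "mgf M (\<lambda>\<omega>. f (X \<omega>))"
  have [measurable]: "Xs i \<in> borel_measurable M" if "i \<in> I" for i
    using indep that unfolding indep_vars_def by auto
  have "(\<integral>\<^sup>+\<omega>. \<integral>\<^sup>+x. ennreal (exp ((\<Sum>i\<in>I. f (Xs i \<omega>)) \<bullet> x - card I * (?L x - 1))) \<partial>gaussian b \<partial>M)
      = (\<integral>\<^sup>+x. \<integral>\<^sup>+\<omega>. ennreal (exp ((\<Sum>i\<in>I. f (Xs i \<omega>)) \<bullet> x - card I * (?L x - 1))) \<partial>M \<partial>gaussian b)"
    by (rule Fubini') measurable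
  also have "\<dots> \<le> (\<integral>\<^sup>+x. 1 \<partial>(gaussian b :: 'c measure))"
  proof (rule nn_integral_mono)
    fix x :: 'c
    have split: "ennreal (exp ((\<Sum>i\<in>I. f (Xs i \<omega>)) \<bullet> x - card I * (?L x - 1)))
        = (\<Prod>i\<in>I. ennreal (exp (x \<bullet> f (Xs i \<omega>)))) * ennreal (exp (card I * (1 - ?L x)))" for \<omega>
    proof -
      have "(\<Sum>i\<in>I. f (Xs i \<omega>)) \<bullet> x - card I * (?L x - 1) = (\<Sum>i\<in>I. x \<bullet> f (Xs i \<omega>)) + card I * (1 - ?L x)"
        by (simp add: inner_sum_right inner_commute[of _ x] algebra_simps)
      then show ?thesis
        using I by (simp add: exp_add exp_sum prod_ennreal ennreal_mult prod_nonneg)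
    qed
    have "(\<integral>\<^sup>+\<omega>. ennreal (exp ((\<Sum>i\<in>I. f (Xs i \<omega>)) \<bullet> x - card I * (?L x - 1))) \<partial>M)
        = (\<integral>\<^sup>+\<omega>. (\<Prod>i\<in>I. ennreal (exp (x \<bullet> f (Xs i \<omega>)))) \<partial>M) * ennreal (exp (card I * (1 - ?L x)))"
      unfolding split by (rule nn_integral_multc) measurable
    also have "\<dots> = ennreal (?L x) ^ card I * ennreal (exp (card I * (1 - ?L x)))"
      using nn_integral_prod_iid[OF I indep distr, of "\<lambda>z. ennreal (exp (x \<bullet> f z))"]
        ennreal_mgf[of "\<lambda>\<omega>. f (X \<omega>)" B x] bnd by simp
    also have "\<dots> = ennreal ((?L x * exp (1 - ?L x)) ^ card I)"
      using mgf_nonneg[of M _ x]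
      by (simp add: ennreal_power ennreal_mult[symmetric] power_mult_distrib exp_of_nat_mult[symmetric])
    also have "\<dots> \<le> 1"
      using mult_exp_one_minus_le_1[of "?L x"] mgf_nonneg[of M _ x] by (simp add: power_le_one)
    finally show "(\<integral>\<^sup>+\<omega>. ennreal (exp ((\<Sum>i\<in>I. f (Xs i \<omega>)) \<bullet> x - card I * (?L x - 1))) \<partial>M) \<le> 1" .
  qed
  also have "\<dots> = 1"
    using G.emeasure_space_1 by simp
  finally show ?thesis .
qed

lemma (in prob_space) inner_bound_from_gaussian_potential:
  fixes V :: "'a \<Rightarrow> 'b::euclidean_space"
  assumes [measurable]: "V \<in> borel_measurable M" and bnd: "\<And>\<omega>. norm (V \<omega>) \<le> B"
    and b: "0 < b" and delta: "0 < delta"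
    and small: "ennreal delta * (\<integral>\<^sup>+x. ennreal (exp (s \<bullet> x - n * (mgf M V x - 1))) \<partial>gaussian b) < 1"
  shows "\<theta> \<bullet> s < ln (1 / delta) + b * (norm \<theta>)\<^sup>2 / 2
    + n * ((\<integral>\<omega>. exp (\<theta> \<bullet> V \<omega> + (norm (V \<omega>))\<^sup>2 / (2 * b)) \<partial>M) - 1)"
proof -
  interpret G: prob_space "gaussian b :: 'b measure" using b by (rule prob_space_gaussian)
  define Q where "Q \<omega> = exp (\<theta> \<bullet> V \<omega> + (norm (V \<omega>))\<^sup>2 / (2 * b))" for \<omega>
  have Q_bound: "norm (Q \<omega>) \<le> exp (norm \<theta> * B + B\<^sup>2 / (2 * b))" for \<omega>
  proof -
    have "\<theta> \<bullet> V \<omega> \<le> norm \<theta> * B"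
      using norm_cauchy_schwarz[of \<theta> "V \<omega>"] mult_left_mono[OF bnd[of \<omega>], of "norm \<theta>"] by simp
    moreover have "(norm (V \<omega>))\<^sup>2 / (2 * b) \<le> B\<^sup>2 / (2 * b)"
      using power_mono[OF bnd[of \<omega>] norm_ge_zero, of 2] b by (simp add: divide_right_mono)
    ultimately show ?thesis by (simp add: Q_def)
  qed
  have int_Q: "integrable M Q"
  proof (rule integrable_const_bound[where B="exp (norm \<theta> * B + B\<^sup>2 / (2 * b))"])
    show "AE \<omega> in M. norm (Q \<omega>) \<le> exp (norm \<theta> * B + B\<^sup>2 / (2 * b))"
      using Q_bound by simp
    show "Q \<in> borel_measurable M"
      unfolding Q_def[abs_def] by measurable
  qed
  have "(\<integral>\<^sup>+y. ennreal (mgf M V (y + \<theta>)) \<partial>gaussian b) = (\<integral>\<^sup>+\<omega>. ennreal (Q \<omega>) \<partial>M)"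
    using nn_integral_gaussian_exp_inner_shift[OF sigma_finite_measure_axioms b, of V \<theta>]
    by (simp add: ennreal_mgf[OF _ bnd] Q_def)
  also have "\<dots> = ennreal (\<integral>\<omega>. Q \<omega> \<partial>M)"
    using int_Q by (rule nn_integral_eq_integral) (simp add: Q_def)
  finally have mgf_shift: "(\<integral>\<^sup>+y. ennreal (mgf M V (y + \<theta>)) \<partial>gaussian b) = ennreal (\<integral>\<omega>. Q \<omega> \<partial>M)" .
  have int_mgf: "integrable (gaussian b) (\<lambda>y. mgf M V (y + \<theta>))"
    by (rule integrableI_nonneg) (auto simp: mgf_shift mgf_nonneg)
  have integral_mgf: "(\<integral>y. mgf M V (y + \<theta>) \<partial>gaussian b) = (\<integral>\<omega>. Q \<omega> \<partial>M)"
    using int_Q by (subst integral_eq_nn_integral) (auto simp: mgf_shift mgf_nonneg Q_def[abs_def])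
  let ?h = "\<lambda>x. s \<bullet> x - n * (mgf M V x - 1)"
  have int_h: "integrable (gaussian b) (\<lambda>y. ?h (y + \<theta>))"
    unfolding inner_add_right
    by (intro Bochner_Integration.integrable_diff Bochner_Integration.integrable_add integrable_mult_right
        integrable_gaussian_inner[OF b] int_mgf G.integrable_const)
  have "(\<integral>y. ?h (y + \<theta>) \<partial>gaussian b) = \<theta> \<bullet> s - n * ((\<integral>\<omega>. Q \<omega> \<partial>M) - 1)"
    unfolding inner_add_right
    using integrable_gaussian_inner[OF b, of s] int_mgf integral_gaussian_inner[OF b, of s] G.prob_space
    by (simp add: integral_mgf inner_commute algebra_simps)
  then have "ennreal (exp (\<theta> \<bullet> s - n * ((\<integral>\<omega>. Q \<omega> \<partial>M) - 1) - b * (norm \<theta>)\<^sup>2 / 2))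
      \<le> (\<integral>\<^sup>+x. ennreal (exp (?h x)) \<partial>gaussian b)"
    using nn_integral_gaussian_change_of_measure[OF b _ int_h] by simp
  then have "ennreal (delta * exp (\<theta> \<bullet> s - n * ((\<integral>\<omega>. Q \<omega> \<partial>M) - 1) - b * (norm \<theta>)\<^sup>2 / 2)) < 1"
    using small delta by (auto simp: ennreal_mult intro: le_less_trans[OF mult_left_mono])
  then have "exp (\<theta> \<bullet> s - n * ((\<integral>\<omega>. Q \<omega> \<partial>M) - 1) - b * (norm \<theta>)\<^sup>2 / 2) < exp (ln (1 / delta))"
    using delta by (simp add: field_simps)
  then show ?thesis by (simp add: Q_def algebra_simps)
qed

lemma (in prob_space) pac_bayes_gaussian_iid:
  fixes X :: "'a \<Rightarrow> 'b::topological_space" and f :: "'b \<Rightarrow> 'c::euclidean_space"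
  assumes I: "finite I" and indep: "indep_vars (\<lambda>_. borel) Xs I"
    and distr: "\<And>i. i \<in> I \<Longrightarrow> distr M borel (Xs i) = distr M borel X"
    and [measurable]: "X \<in> borel_measurable M" "f \<in> borel_measurable borel"
    and bnd: "\<And>z. norm (f z) \<le> B" and b: "0 < b" and delta: "0 < delta"
  shows "\<exists>A\<in>events. 1 - delta \<le> prob A \<and> (\<forall>\<omega>\<in>A. \<forall>\<theta>.
    \<theta> \<bullet> (\<Sum>i\<in>I. f (Xs i \<omega>)) < ln (1 / delta) + b * (norm \<theta>)\<^sup>2 / 2
      + card I * ((\<integral>\<omega>'. exp (\<theta> \<bullet> f (X \<omega>') + (norm (f (X \<omega>')))\<^sup>2 / (2 * b)) \<partial>M) - 1))"
proof -
  interpret G: prob_space "gaussian b :: 'c measure" using b by (rule prob_space_gaussian)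
  have [measurable]: "Xs i \<in> borel_measurable M" if "i \<in> I" for i
    using indep that unfolding indep_vars_def by auto
  define Z where "Z \<omega> = (\<integral>\<^sup>+x. ennreal (exp ((\<Sum>i\<in>I. f (Xs i \<omega>)) \<bullet> x
      - card I * (mgf M (\<lambda>\<omega>. f (X \<omega>)) x - 1))) \<partial>gaussian b)" for \<omega>
  have [measurable]: "Z \<in> borel_measurable M"
    unfolding Z_def[abs_def] by measurable
  define A where "A = {\<omega> \<in> space M. ennreal delta * Z \<omega> < 1}"
  show ?thesis
  proof (intro bexI conjI ballI allI)
    show "A \<in> events"
      unfolding A_def by measurable
    show "1 - delta \<le> prob A"
      unfolding A_def using nn_integral_gaussian_potential_le_1[OF I indep distr assms(4,5) bnd b] delta
      by (intro prob_Markov_nn_integral_le_1) (auto simp: Z_def)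
    fix \<omega> \<theta> assume "\<omega> \<in> A"
    then show "\<theta> \<bullet> (\<Sum>i\<in>I. f (Xs i \<omega>)) < ln (1 / delta) + b * (norm \<theta>)\<^sup>2 / 2
      + card I * ((\<integral>\<omega>'. exp (\<theta> \<bullet> f (X \<omega>') + (norm (f (X \<omega>')))\<^sup>2 / (2 * b)) \<partial>M) - 1)"
      unfolding A_def Z_def using bnd b delta
      by (intro inner_bound_from_gaussian_potential[where B=B]) auto
  qed
qed

lemma (in prob_space) integral_exp_inner_norm_sq_le:
  fixes V :: "'a \<Rightarrow> 'b::euclidean_space"
  assumes [measurable]: "V \<in> borel_measurable M" and bnd: "\<And>\<omega>. norm (V \<omega>) \<le> c"
    and c: "0 < c" and b: "0 < b" and \<theta>: "norm \<theta> \<le> 1" and centred: "(\<integral>\<omega>. \<theta> \<bullet> V \<omega> \<partial>M) = 0"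
  shows "(\<integral>\<omega>. exp (\<theta> \<bullet> V \<omega> + (norm (V \<omega>))\<^sup>2 / (2 * b)) \<partial>M) - 1
    \<le> g2 c / 2 * (\<integral>\<omega>. (\<theta> \<bullet> V \<omega>)\<^sup>2 \<partial>M)
      + exp c * g1 (c\<^sup>2 / (2 * b)) / (2 * b) * (\<integral>\<omega>. (norm (V \<omega>))\<^sup>2 \<partial>M)"
proof -
  have bounded_integrable: "integrable M g" if "g \<in> borel_measurable M" "\<And>\<omega>. norm (g \<omega>) \<le> K" for g :: "_ \<Rightarrow> real" and K
    using that by (intro integrable_const_bound[where B=K]) auto
  have inner_le: "\<bar>\<theta> \<bullet> V \<omega>\<bar> \<le> c" for \<omega>
    using Cauchy_Schwarz_ineq2[of \<theta> "V \<omega>"] mult_mono[OF \<theta> bnd[of \<omega>]] by simp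
  have norm_sq_le: "(norm (V \<omega>))\<^sup>2 \<le> c\<^sup>2" for \<omega>
    using power_mono[OF bnd[of \<omega>] norm_ge_zero, of 2] .
  have inner_sq_le: "(\<theta> \<bullet> V \<omega>)\<^sup>2 \<le> c\<^sup>2" for \<omega>
    using power_mono[OF inner_le[of \<omega>] abs_ge_zero, of 2] by simp
  have int_inner: "integrable M (\<lambda>\<omega>. \<theta> \<bullet> V \<omega>)"
    using inner_le by (intro bounded_integrable) auto
  have int_inner_sq: "integrable M (\<lambda>\<omega>. (\<theta> \<bullet> V \<omega>)\<^sup>2)"
    using inner_sq_le by (intro bounded_integrable) auto
  have int_norm_sq: "integrable M (\<lambda>\<omega>. (norm (V \<omega>))\<^sup>2)"
    using norm_sq_le by (intro bounded_integrable) auto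
  have "norm (exp (\<theta> \<bullet> V \<omega> + (norm (V \<omega>))\<^sup>2 / (2 * b))) \<le> exp (c + c\<^sup>2 / (2 * b))" for \<omega>
  proof -
    have "\<theta> \<bullet> V \<omega> \<le> c" using inner_le[of \<omega>] by (simp add: abs_le_iff)
    moreover have "(norm (V \<omega>))\<^sup>2 / (2 * b) \<le> c\<^sup>2 / (2 * b)"
      using norm_sq_le[of \<omega>] b by (simp add: divide_right_mono)
    ultimately show ?thesis by simp
  qed
  then have int_exp: "integrable M (\<lambda>\<omega>. exp (\<theta> \<bullet> V \<omega> + (norm (V \<omega>))\<^sup>2 / (2 * b)))"
    by (intro bounded_integrable) auto
  have "(\<integral>\<omega>. exp (\<theta> \<bullet> V \<omega> + (norm (V \<omega>))\<^sup>2 / (2 * b)) \<partial>M) - 1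
      = (\<integral>\<omega>. exp (\<theta> \<bullet> V \<omega> + (norm (V \<omega>))\<^sup>2 / (2 * b)) - 1 \<partial>M)"
    using int_exp by (simp add: prob_space)
  also have "\<dots> \<le> (\<integral>\<omega>. \<theta> \<bullet> V \<omega> + g2 c / 2 * (\<theta> \<bullet> V \<omega>)\<^sup>2
      + exp c * g1 (c\<^sup>2 / (2 * b)) / (2 * b) * (norm (V \<omega>))\<^sup>2 \<partial>M)"
  proof (rule integral_mono)
    fix \<omega>
    have "exp (\<theta> \<bullet> V \<omega> + (norm (V \<omega>))\<^sup>2 / (2 * b)) - 1
        \<le> \<theta> \<bullet> V \<omega> + g2 c * (\<theta> \<bullet> V \<omega>)\<^sup>2 / 2 + exp c * g1 (c\<^sup>2 / (2 * b)) * ((norm (V \<omega>))\<^sup>2 / (2 * b))"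
      using inner_le[of \<omega>] norm_sq_le[of \<omega>] c b
      by (intro exp_add_minus_one_le) (auto intro: divide_right_mono)
    then show "exp (\<theta> \<bullet> V \<omega> + (norm (V \<omega>))\<^sup>2 / (2 * b)) - 1 \<le> \<theta> \<bullet> V \<omega> + g2 c / 2 * (\<theta> \<bullet> V \<omega>)\<^sup>2
      + exp c * g1 (c\<^sup>2 / (2 * b)) / (2 * b) * (norm (V \<omega>))\<^sup>2"
      by simp
  qed (intro Bochner_Integration.integrable_add Bochner_Integration.integrable_diff integrable_mult_right
      int_exp int_inner int_inner_sq int_norm_sq integrable_const)+
  also have "\<dots> = g2 c / 2 * (\<integral>\<omega>. (\<theta> \<bullet> V \<omega>)\<^sup>2 \<partial>M)
      + exp c * g1 (c\<^sup>2 / (2 * b)) / (2 * b) * (\<integral>\<omega>. (norm (V \<omega>))\<^sup>2 \<partial>M)"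
    by (simp add: Bochner_Integration.integral_add integrable_mult_right int_inner int_inner_sq int_norm_sq centred)
  finally show ?thesis .
qed

lemma (in prob_space) iid_centred_mean_deviation_bound:
  fixes X :: "'a \<Rightarrow> 'b::topological_space" and f :: "'b \<Rightarrow> 'c::euclidean_space"
  assumes I: "finite I" "I \<noteq> {}" and indep: "indep_vars (\<lambda>_. borel) Xs I"
    and distr: "\<And>i. i \<in> I \<Longrightarrow> distr M borel (Xs i) = distr M borel X"
    and X_meas[measurable]: "X \<in> borel_measurable M" and f_meas[measurable]: "f \<in> borel_measurable borel"
    and bnd: "\<And>z. norm (f z) \<le> r" and r: "0 < r" and centred: "(\<integral>\<omega>. f (X \<omega>) \<partial>M) = 0"
    and a: "0 < a" and b: "0 < b" and delta: "0 < delta"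
  shows "\<exists>A\<in>events. 1 - delta \<le> prob A \<and> (\<forall>\<omega>\<in>A. \<forall>\<theta>. norm \<theta> = 1 \<longrightarrow>
    (\<Sum>i\<in>I. \<theta> \<bullet> f (Xs i \<omega>)) / card I
      \<le> g2 (a * r) * (a / 2) * (\<integral>\<omega>'. (\<theta> \<bullet> f (X \<omega>'))\<^sup>2 \<partial>M)
        + exp (a * r) * g1 ((a * r)\<^sup>2 / (2 * b)) * (a / (2 * b)) * (\<integral>\<omega>'. (norm (f (X \<omega>')))\<^sup>2 \<partial>M)
        + (b + 2 * ln (1 / delta)) / (2 * a * card I))"
proof -
  have scaled_bnd: "norm (a *\<^sub>R f z) \<le> a * r" for z
    using bnd[of z] a by (simp add: mult_left_mono)
  have scaled_meas: "(\<lambda>z. a *\<^sub>R f z) \<in> borel_measurable borel"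
    by measurable
  obtain A where A: "A \<in> events" "1 - delta \<le> prob A" and pac: "\<And>\<omega> \<theta>. \<omega> \<in> A \<Longrightarrow>
      \<theta> \<bullet> (\<Sum>i\<in>I. a *\<^sub>R f (Xs i \<omega>)) < ln (1 / delta) + b * (norm \<theta>)\<^sup>2 / 2
      + card I * ((\<integral>\<omega>'. exp (\<theta> \<bullet> (a *\<^sub>R f (X \<omega>')) + (norm (a *\<^sub>R f (X \<omega>')))\<^sup>2 / (2 * b)) \<partial>M) - 1)"
    using pac_bayes_gaussian_iid[OF I(1) indep distr X_meas scaled_meas scaled_bnd b delta] by auto
  show ?thesis
  proof (intro bexI[OF _ A(1)] conjI ballI allI impI)
    show "1 - delta \<le> prob A" by (rule A(2))
    fix \<omega> and \<theta> :: 'c assume \<omega>: "\<omega> \<in> A" and \<theta>: "norm \<theta> = 1"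
    define S where "S = (\<Sum>i\<in>I. \<theta> \<bullet> f (Xs i \<omega>))"
    define E1 where "E1 = (\<integral>\<omega>'. (\<theta> \<bullet> f (X \<omega>'))\<^sup>2 \<partial>M)"
    define E2 where "E2 = (\<integral>\<omega>'. (norm (f (X \<omega>')))\<^sup>2 \<partial>M)"
    define K where "K = exp (a * r) * g1 ((a * r)\<^sup>2 / (2 * b)) / (2 * b)"
    have int_f: "integrable M (\<lambda>\<omega>. f (X \<omega>))"
      using bnd by (intro integrable_const_bound[where B=r]) auto
    have "(\<integral>\<omega>'. \<theta> \<bullet> (a *\<^sub>R f (X \<omega>')) \<partial>M) = 0"
      using centred int_f by simp
    then have "(\<integral>\<omega>'. exp (\<theta> \<bullet> (a *\<^sub>R f (X \<omega>')) + (norm (a *\<^sub>R f (X \<omega>')))\<^sup>2 / (2 * b)) \<partial>M) - 1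
        \<le> g2 (a * r) / 2 * (a\<^sup>2 * E1) + K * (a\<^sup>2 * E2)"
      using integral_exp_inner_norm_sq_le[of "\<lambda>\<omega>'. a *\<^sub>R f (X \<omega>')" "a * r" b \<theta>] scaled_bnd \<theta> a r b
      by (simp add: E1_def E2_def K_def power_mult_distrib)
    with pac[OF \<omega>, of \<theta>] \<theta> have aS: "a * S < ln (1 / delta) + b / 2
        + card I * (g2 (a * r) / 2 * (a\<^sup>2 * E1) + K * (a\<^sup>2 * E2))"
      using mult_left_mono[of _ _ "real (card I)"]
      by (force simp: S_def inner_sum_right sum_distrib_left)
    have "S / card I = a * S / (a * card I)"
      using a by simp
    also have "\<dots> \<le> (ln (1 / delta) + b / 2
        + card I * (g2 (a * r) / 2 * (a\<^sup>2 * E1) + K * (a\<^sup>2 * E2))) / (a * card I)"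
      using aS a I by (intro divide_right_mono) auto
    also have "\<dots> = g2 (a * r) * (a / 2) * E1 + K * 2 * b * (a / (2 * b)) * E2
        + (b + 2 * ln (1 / delta)) / (2 * a * card I)"
      using a b I by (simp add: field_simps power2_eq_square)
    finally show "S / card I \<le> g2 (a * r) * (a / 2) * E1 + exp (a * r) * g1 ((a * r)\<^sup>2 / (2 * b)) * (a / (2 * b)) * E2
        + (b + 2 * ln (1 / delta)) / (2 * a * card I)"
      using b by (simp add: K_def)
  qed
qed

section \<open>The thresholded empirical mean\<close>

lemma borel_measurable_thresh[measurable]:
  "thresh lam \<in> borel_measurable (borel :: 'a::euclidean_space measure)"
  unfolding thresh_def[abs_def] psi_def by measurable

lemma norm_thresh_le:
  assumes "0 < lam" shows "norm (thresh lam x) \<le> 1 / lam"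
proof (cases "x = 0")
  case False
  then have "norm (thresh lam x) = min (lam * norm x) 1 / lam"
    using assms by (simp add: thresh_def psi_def)
  also have "\<dots> \<le> 1 / lam"
    using assms by (intro divide_right_mono) auto
  finally show ?thesis .
qed (use assms in \<open>simp add: thresh_def\<close>)

lemma (in prob_space) integrable_thresh:
  fixes X :: "'a \<Rightarrow> 'b::euclidean_space"
  assumes "X \<in> borel_measurable M" and "0 < lam"
  shows "integrable M (\<lambda>\<omega>. thresh lam (X \<omega>))"
  using assms by (intro integrable_const_bound[where B="1 / lam"]) (auto simp: norm_thresh_le)

lemma (in prob_space) norm_thresh_minus_expectation_le:
  fixes X :: "'a \<Rightarrow> 'b::euclidean_space"
  assumes [measurable]: "X \<in> borel_measurable M" and lam: "0 < lam"
  shows "norm (thresh lam z - (\<integral>\<omega>. thresh lam (X \<omega>) \<partial>M)) \<le> 2 / lam"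
proof -
  have "norm (\<integral>\<omega>. thresh lam (X \<omega>) \<partial>M) \<le> (\<integral>\<omega>. norm (thresh lam (X \<omega>)) \<partial>M)"
    by (rule integral_norm_bound)
  also have "\<dots> \<le> (\<integral>\<omega>. 1 / lam \<partial>M)"
    using integrable_thresh[OF assms] lam by (intro integral_mono) (auto simp: norm_thresh_le)
  finally have "norm (\<integral>\<omega>. thresh lam (X \<omega>) \<partial>M) \<le> 1 / lam"
    by (simp add: prob_space)
  moreover have "2 / lam = 1 / lam + 1 / lam" by simp
  ultimately show ?thesis
    using norm_triangle_ineq4[of "thresh lam z" "\<integral>\<omega>. thresh lam (X \<omega>) \<partial>M"] norm_thresh_le[OF lam, of z]
    by linarith
qed

theorem mainTheorem2:
  fixes M :: "'s measure" and X :: "'s \<Rightarrow> 'a::euclidean_space"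
    and Xs :: "nat \<Rightarrow> 's \<Rightarrow> 'a" and n :: nat
    and lam mu beta delta :: real
  assumes "prob_space M"
    and "integrable M X"
    and "prob_space.indep_vars M (\<lambda>_. borel) Xs {1..n}"
    and "\<And>i. i \<in> {1..n} \<Longrightarrow> distr M borel (Xs i) = distr M borel X"
    and "n > 0"
    and "lam > 0" and "mu > 0" and "beta > 0"
    and "0 < delta" and "delta < 1"
  shows "\<exists>A \<in> sets M. measure M A \<ge> 1 - delta \<and>
    (\<forall>\<omega> \<in> A. \<forall>\<theta>::'a. norm \<theta> = 1 \<longrightarrow>
      (let mt = (\<integral>\<omega>'. thresh lam (X \<omega>') \<partial>M);
           mh = (1 / real n) *\<^sub>R (\<Sum>i=1..n. thresh lam (Xs i \<omega>))
       in \<theta> \<bullet> (mh - mt) = (1 / real n) * (\<Sum>i=1..n. \<theta> \<bullet> (thresh lam (Xs i \<omega>) - mt))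
        \<and> \<theta> \<bullet> (mh - mt) \<le>
            g2 (2 * mu) * (mu * lam / 2) * (\<integral>\<omega>'. (\<theta> \<bullet> (thresh lam (X \<omega>') - mt))\<^sup>2 \<partial>M)
          + exp (2 * mu) * g1 (2 * mu\<^sup>2 / beta) * (mu * lam / (2 * beta))
              * (\<integral>\<omega>'. (norm (thresh lam (X \<omega>') - mt))\<^sup>2 \<partial>M)
          + (beta + 2 * ln (1 / delta)) / (2 * mu * lam * real n)))"
proof -
  interpret prob_space M by fact
  have X_meas[measurable]: "X \<in> borel_measurable M"
    using assms(2) by (rule borel_measurable_integrable)
  define mt where "mt = (\<integral>\<omega>. thresh lam (X \<omega>) \<partial>M)"
  have centred: "(\<integral>\<omega>. thresh lam (X \<omega>) - mt \<partial>M) = 0"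
    using integrable_thresh[OF X_meas assms(6)] by (simp add: mt_def prob_space)
  have scale: "mu * lam * (2 / lam) = 2 * mu" "(2 * mu)\<^sup>2 / (2 * beta) = 2 * mu\<^sup>2 / beta"
    using assms(6) by (simp_all add: power2_eq_square)
  obtain A where A: "A \<in> events" "1 - delta \<le> prob A" and deviation: "\<And>\<omega> \<theta>. \<omega> \<in> A \<Longrightarrow> norm \<theta> = 1 \<Longrightarrow>
      (\<Sum>i=1..n. \<theta> \<bullet> (thresh lam (Xs i \<omega>) - mt)) / n
      \<le> g2 (2 * mu) * (mu * lam / 2) * (\<integral>\<omega>'. (\<theta> \<bullet> (thresh lam (X \<omega>') - mt))\<^sup>2 \<partial>M)
        + exp (2 * mu) * g1 (2 * mu\<^sup>2 / beta) * (mu * lam / (2 * beta))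
          * (\<integral>\<omega>'. (norm (thresh lam (X \<omega>') - mt))\<^sup>2 \<partial>M)
        + (beta + 2 * ln (1 / delta)) / (2 * mu * lam * real n)"
    using iid_centred_mean_deviation_bound[OF finite_atLeastAtMost _ assms(3,4) X_meas _
        norm_thresh_minus_expectation_le[OF X_meas assms(6), folded mt_def] _ centred, of "mu * lam" beta delta]
      assms(5-9) unfolding scale by (auto simp: mult.assoc)
  have mean: "\<theta> \<bullet> ((1 / real n) *\<^sub>R (\<Sum>i=1..n. thresh lam (Xs i \<omega>)) - mt)
      = (\<Sum>i=1..n. \<theta> \<bullet> (thresh lam (Xs i \<omega>) - mt)) / n" for \<omega> \<theta>
    using assms(5) by (simp add: inner_diff_right inner_sum_right sum_subtractf field_simps)
  show ?thesis
    unfolding Let_def mt_def[symmetric] mean using A deviation by auto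
qed

end
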